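(* Let $\{A_i\}_{i\in I}$ be a family of groups. Then $\mathrm{TorLen}( *_{i\in I}A_i)=\sup\{\mathrm{TorLen}(A_i)\}_{i\in I}$.
   Context: For a group $G$, define $\mathrm{Tor}_0(G)=\{e\}$ and inductively $\mathrm{Tor}_{i+1}(G)$ to be the normal closure in $G$ of $\{g\in G : g\,\mathrm{Tor}_i(G)\text{ has finite order in } G/\mathrm{Tor}_i(G)\}$; set $\mathrm{Tor}_\infty(G)=\bigcup_{i}\mathrm{Tor}_i(G)$. The torsion length $\mathrm{TorLen}(G)$ is the smallest $n\ge 0$ with $\mathrm{Tor}_n(G)=\mathrm{Tor}_\infty(G)$, and $\infty$ if no such $n$ exists; the supremum is taken in $\mathbb{N}\cup\{\infty\}$. *)

theory Defs
  imports "HOL-Algebra.Algebra" "HOL-Library.Extended_Nat"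
begin

definition normal_closure :: "('a, 'b) monoid_scheme \<Rightarrow> 'a set \<Rightarrow> 'a set" where
  "normal_closure G S = \<Inter> {N. N \<lhd> G \<and> S \<subseteq> N}"

fun Tor :: "('a, 'b) monoid_scheme \<Rightarrow> nat \<Rightarrow> 'a set" where
  "Tor G 0 = {\<one>\<^bsub>G\<^esub>}"
| "Tor G (Suc n) = normal_closure G
     {g \<in> carrier G. \<exists>k::nat. k > 0 \<and>
        (Tor G n #>\<^bsub>G\<^esub> g) [^]\<^bsub>G Mod (Tor G n)\<^esub> k = \<one>\<^bsub>G Mod (Tor G n)\<^esub>}"

definition Tor_inf :: "('a, 'b) monoid_scheme \<Rightarrow> 'a set" where
  "Tor_inf G = (\<Union>n. Tor G n)"

definition TorLen :: "('a, 'b) monoid_scheme \<Rightarrow> enat" where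
  "TorLen G = (if \<exists>n. Tor G n = Tor_inf G
               then enat (LEAST n. Tor G n = Tor_inf G) else \<infinity>)"

definition reduced_word :: "'i set \<Rightarrow> ('i \<Rightarrow> ('a, 'b) monoid_scheme) \<Rightarrow> ('i \<times> 'a) list \<Rightarrow> bool" where
  "reduced_word I A w \<longleftrightarrow>
     (\<forall>(i, a) \<in> set w. i \<in> I \<and> a \<in> carrier (A i) \<and> a \<noteq> \<one>\<^bsub>A i\<^esub>) \<and>
     successively (\<lambda>x y. fst x \<noteq> fst y) w"

fun fp_cons :: "('i \<Rightarrow> ('a, 'b) monoid_scheme) \<Rightarrow> 'i \<times> 'a \<Rightarrow> ('i \<times> 'a) list \<Rightarrow> ('i \<times> 'a) list" where
  "fp_cons A (i, a) [] = (if a = \<one>\<^bsub>A i\<^esub> then [] else [(i, a)])"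
| "fp_cons A (i, a) ((j, b) # w) =
     (if i = j then (let c = a \<otimes>\<^bsub>A i\<^esub> b in if c = \<one>\<^bsub>A i\<^esub> then w else (i, c) # w)
      else if a = \<one>\<^bsub>A i\<^esub> then (j, b) # w else (i, a) # (j, b) # w)"

definition fp_mult :: "('i \<Rightarrow> ('a, 'b) monoid_scheme) \<Rightarrow> ('i \<times> 'a) list \<Rightarrow> ('i \<times> 'a) list \<Rightarrow> ('i \<times> 'a) list" where
  "fp_mult A w v = foldr (fp_cons A) w v"

definition free_product :: "'i set \<Rightarrow> ('i \<Rightarrow> ('a, 'b) monoid_scheme) \<Rightarrow> ('i \<times> 'a) list monoid" where
  "free_product I A = \<lparr>carrier = {w. reduced_word I A w}, monoid.mult = fp_mult A, one = []\<rparr>"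

end

theory Submission
  imports Defs
begin

text \<open>
  The torsion length of a group is at most n exactly when its torsion series stabilises at step n,
  that is, when Tor_(n+1) is contained in Tor_n. For the free product F of the A_i one shows by
  induction on n that Tor_n F is the normal closure of the Tor_n A_i. Modulo this normal closure,
  F becomes the free product of the quotients A_i / Tor_n A_i, and in a free product every element
  of finite order is conjugate into a factor, because cyclically reduced words of positive length
  have infinite order. Lifting such a conjugate shows that every element of F with a power in
  Tor_n F lies in the normal closure of the Tor_(n+1) A_i. Consequently F stabilises at step n as
  soon as all factors do; conversely each A_i is a retract of F, and the torsion series is
  functorial, so F stabilises no earlier than any factor.
\<close>

section \<open>Normal closures and the torsion series\<close>

lemma (in group) nat_pow_conj:
  assumes "g \<in> carrier G" "w \<in> carrier G"
  shows "(inv g \<otimes> w \<otimes> g) [^] (k::nat) = inv g \<otimes> w [^] k \<otimes> g"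
proof (induction k)
  case (Suc k)
  have "g \<otimes> (inv g \<otimes> (w \<otimes> g)) = w \<otimes> g" using assms by (simp flip: m_assoc)
  then show ?case using Suc assms by (simp add: m_assoc)
qed (use assms in simp)

lemma (in group) conj_eq_conjD:
  assumes "g \<in> carrier G" "w \<in> carrier G" "u \<in> carrier G" "x \<in> carrier G"
    and "inv g \<otimes> w \<otimes> g = u \<otimes> x \<otimes> inv u"
  shows "w = (g \<otimes> u) \<otimes> x \<otimes> inv (g \<otimes> u)"
proof -
  have "w = g \<otimes> (inv g \<otimes> w \<otimes> g) \<otimes> inv g"
    using assms(1,2) by (metis inv_closed l_one m_assoc m_closed r_inv r_one)
  then show ?thesis using assms by (simp add: m_assoc inv_mult_group)
qed

lemma (in normal) rcos_eq_self_iff: "x \<in> carrier G \<Longrightarrow> H #> x = H \<longleftrightarrow> x \<in> H"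
  by (metis coset_join2 is_subgroup rcos_self)

lemma (in normal) kernel_r_coset_hom: "kernel G (G Mod H) (\<lambda>a. H #> a) = H"
  using rcos_eq_self_iff subset by (auto simp: kernel_def)

lemma (in group_hom) mem_normal_if_hom_eq:
  assumes "N \<lhd> G" "kernel G H h \<subseteq> N" "x \<in> carrier G" "t \<in> N" "h x = h t"
  shows "x \<in> N"
proof -
  interpret N: normal N G by fact
  have t: "t \<in> carrier G" using assms(4) by (rule N.mem_carrier)
  have "x \<otimes> inv t \<in> kernel G H h" using assms(3,5) t by (simp add: kernel_def)
  then have "x \<otimes> inv t \<in> N" using assms(2) by blast
  then have "x \<otimes> inv t \<otimes> t \<in> N" using assms(4) by (rule N.m_closed)
  then show ?thesis using assms(3) t by (simp add: G.m_assoc)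
qed

lemma normal_vimage:
  assumes "group_hom G H f" and "N \<lhd> H"
  shows "{x \<in> carrier G. f x \<in> N} \<lhd> G"
proof -
  interpret group_hom G H f by fact
  interpret N: normal N H by fact
  have "subgroup {x \<in> carrier G. f x \<in> N} G"
    by (rule G.subgroupI) (use N.one_closed N.m_inv_closed N.m_closed in auto)
  then show ?thesis
    by (rule G.normal_invI) (use N.inv_op_closed2 in auto)
qed

lemma normal_closure_normal:
  assumes "group G" "S \<subseteq> carrier G"
  shows "normal_closure G S \<lhd> G"
proof -
  interpret group G by fact
  let ?N = "{N. N \<lhd> G \<and> S \<subseteq> N}"
  have "carrier G \<in> ?N" using assms(2) by (simp add: normal_invI subgroup_self)
  then have sg: "subgroup (\<Inter>?N) G"
    by (intro subgroups_Inter) (auto dest: normal_imp_subgroup)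
  show ?thesis unfolding normal_closure_def
    by (rule normal_invI[OF sg]) (auto intro: normal.inv_op_closed2)
qed

lemma normal_closure_incl: "S \<subseteq> carrier G \<Longrightarrow> group G \<Longrightarrow> S \<subseteq> normal_closure G S"
  unfolding normal_closure_def by auto

lemma normal_closure_least: "N \<lhd> G \<Longrightarrow> S \<subseteq> N \<Longrightarrow> normal_closure G S \<subseteq> N"
  unfolding normal_closure_def by auto

lemma normal_closure_mono:
  "group G \<Longrightarrow> T \<subseteq> carrier G \<Longrightarrow> S \<subseteq> T \<Longrightarrow> normal_closure G S \<subseteq> normal_closure G T"
  by (meson normal_closure_least normal_closure_normal normal_closure_incl order_trans)

lemma Tor_normal: "group G \<Longrightarrow> Tor G n \<lhd> G"
  by (cases n) (auto intro: normal_closure_normal group.one_is_normal)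

lemma Tor_subset_carrier: "group G \<Longrightarrow> Tor G n \<subseteq> carrier G"
  using Tor_normal normal_imp_subgroup subgroup.subset by blast

definition torsion_mod :: "('a, 'b) monoid_scheme \<Rightarrow> 'a set \<Rightarrow> 'a set" where
  "torsion_mod G N = {g \<in> carrier G. \<exists>k::nat. k > 0 \<and> g [^]\<^bsub>G\<^esub> k \<in> N}"

lemma Tor_Suc_eq: "group G \<Longrightarrow> Tor G (Suc n) = normal_closure G (torsion_mod G (Tor G n))"
proof -
  assume G: "group G"
  interpret N: normal "Tor G n" G by (rule Tor_normal[OF G])
  have "(Tor G n #>\<^bsub>G\<^esub> g) [^]\<^bsub>G Mod Tor G n\<^esub> k = \<one>\<^bsub>G Mod Tor G n\<^esub> \<longleftrightarrow> g [^]\<^bsub>G\<^esub> k \<in> Tor G n"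
    if "g \<in> carrier G" for g and k :: nat
    using that by (simp add: N.FactGroup_pow N.rcos_eq_self_iff)
  then show ?thesis by (simp add: torsion_mod_def cong: conj_cong)
qed

(* From here on Tor_Suc_eq, which needs no quotient groups, replaces the defining equation. *)
declare Tor.simps(2) [simp del]

lemma torsion_mod_subset: "torsion_mod G N \<subseteq> carrier G"
  unfolding torsion_mod_def by blast

lemma Tor_SucI:
  fixes k :: nat
  assumes "g \<in> carrier G" "k > 0"
    and "(Tor G n #>\<^bsub>G\<^esub> g) [^]\<^bsub>G Mod Tor G n\<^esub> k = \<one>\<^bsub>G Mod Tor G n\<^esub>"
  shows "g \<in> Tor G (Suc n)"
  using assms unfolding Tor.simps(2) normal_closure_def by blast

lemma torsion_mod_Tor_subset_Tor_Suc: "group G \<Longrightarrow> torsion_mod G (Tor G n) \<subseteq> Tor G (Suc n)"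
  unfolding Tor_Suc_eq by (intro normal_closure_incl torsion_mod_subset)

lemma Tor_subset_Tor_Suc: "group G \<Longrightarrow> Tor G n \<subseteq> Tor G (Suc n)"
proof -
  assume G: "group G"
  have "Tor G n \<subseteq> torsion_mod G (Tor G n)"
    using Tor_subset_carrier[OF G] unfolding torsion_mod_def
    by (force intro: exI[of _ "1::nat"] simp: group.is_monoid[OF G])
  then show ?thesis using torsion_mod_Tor_subset_Tor_Suc[OF G] by blast
qed

lemma Tor_mono:
  assumes "group G" "m \<le> n"
  shows "Tor G m \<subseteq> Tor G n"
  using assms(2)
proof (induction n rule: dec_induct)
  case (step n)
  then show ?case using Tor_subset_Tor_Suc[OF assms(1), of n] by blast
qed simp

lemma Tor_stable_eq:
  assumes G: "group G" and stable: "Tor G (Suc n) \<subseteq> Tor G n" and "n \<le> m"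
  shows "Tor G m = Tor G n"
  using assms(3)
proof (induction m rule: dec_induct)
  case (step m)
  have "Tor G (Suc m) = normal_closure G (torsion_mod G (Tor G m))" by (rule Tor_Suc_eq[OF G])
  also have "\<dots> = Tor G (Suc n)" unfolding step.IH by (rule Tor_Suc_eq[OF G, symmetric])
  also have "\<dots> = Tor G n" using stable Tor_subset_Tor_Suc[OF G, of n] by (rule subset_antisym)
  finally show ?case .
qed (rule refl)

lemma Tor_stable:
  assumes "group G" and "Tor G (Suc n) \<subseteq> Tor G n"
  shows "Tor G m \<subseteq> Tor G n"
proof (cases "m \<le> n")
  case True then show ?thesis by (rule Tor_mono[OF assms(1)])
next
  case False then show ?thesis using Tor_stable_eq[OF assms, of m] by simp
qed

lemma Tor_eq_Tor_inf_iff: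
  assumes "group G"
  shows "Tor G n = Tor_inf G \<longleftrightarrow> Tor G (Suc n) \<subseteq> Tor G n"
proof
  assume "Tor G n = Tor_inf G"
  then show "Tor G (Suc n) \<subseteq> Tor G n" unfolding Tor_inf_def by blast
next
  assume "Tor G (Suc n) \<subseteq> Tor G n"
  then have "(\<Union>m. Tor G m) \<subseteq> Tor G n" using Tor_stable[OF assms] by blast
  then show "Tor G n = Tor_inf G" unfolding Tor_inf_def by blast
qed

lemma TorLen_le_iff:
  assumes G: "group G"
  shows "TorLen G \<le> enat n \<longleftrightarrow> Tor G (Suc n) \<subseteq> Tor G n"
proof (cases "\<exists>m. Tor G m = Tor_inf G")
  case True
  define l where "l = (LEAST m. Tor G m = Tor_inf G)"
  have l: "Tor G l = Tor_inf G" unfolding l_def using True by (rule LeastI_ex)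
  have "l \<le> n \<longleftrightarrow> Tor G n = Tor_inf G"
  proof
    assume "l \<le> n"
    then show "Tor G n = Tor_inf G" using l Tor_mono[OF G] unfolding Tor_inf_def by blast
  qed (simp add: l_def Least_le)
  then show ?thesis using True by (simp add: TorLen_def l_def Tor_eq_Tor_inf_iff[OF G])
next
  case False
  then show ?thesis by (simp add: TorLen_def flip: Tor_eq_Tor_inf_iff[OF G])
qed

lemma enat_eqI_le:
  fixes x y :: enat
  assumes "\<And>n. x \<le> enat n \<longleftrightarrow> y \<le> enat n"
  shows "x = y"
proof (cases x)
  case (enat a)
  then obtain b where b: "y = enat b" "b \<le> a" using assms[of a] by (cases y) auto
  then show ?thesis using enat assms[of b] by simp
next
  case infinity
  then show ?thesis using assms by (cases y) auto
qed

lemma Tor_hom_image: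
  assumes G: "group G" and H: "group H" and f: "f \<in> hom G H"
  shows "f ` Tor G n \<subseteq> Tor H n"
proof (induction n)
  case 0
  interpret group_hom G H f using G H f by (simp add: group_hom_def group_hom_axioms_def)
  show ?case by simp
next
  case (Suc n)
  interpret f: group_hom G H f using G H f by (simp add: group_hom_def group_hom_axioms_def)
  have "torsion_mod G (Tor G n) \<subseteq> {x \<in> carrier G. f x \<in> Tor H (Suc n)}"
  proof
    fix g assume "g \<in> torsion_mod G (Tor G n)"
    then obtain k :: nat where g: "g \<in> carrier G" "k > 0" "g [^]\<^bsub>G\<^esub> k \<in> Tor G n"
      unfolding torsion_mod_def by blast
    then have "f g [^]\<^bsub>H\<^esub> k \<in> Tor H n" using Suc by (auto simp flip: f.hom_nat_pow)
    then have "f g \<in> torsion_mod H (Tor H n)" unfolding torsion_mod_def using g by auto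
    then show "g \<in> {x \<in> carrier G. f x \<in> Tor H (Suc n)}"
      using g torsion_mod_Tor_subset_Tor_Suc[OF H] by blast
  qed
  then have "Tor G (Suc n) \<subseteq> {x \<in> carrier G. f x \<in> Tor H (Suc n)}"
    unfolding Tor_Suc_eq[OF G]
    by (rule normal_closure_least[OF normal_vimage[OF f.group_hom_axioms Tor_normal[OF H]]])
  then show ?case by blast
qed

section \<open>Free products of groups\<close>

locale free_prod =
  fixes I :: "'i set" and A :: "'i \<Rightarrow> ('a, 'b) monoid_scheme"
  assumes group_factor: "\<And>i. i \<in> I \<Longrightarrow> group (A i)"
begin

abbreviation reduced where "reduced \<equiv> reduced_word I A"

abbreviation FP where "FP \<equiv> free_product I A"

lemma carrier_FP [simp]: "carrier FP = {w. reduced w}"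
  and mult_FP [simp]: "w \<otimes>\<^bsub>FP\<^esub> v = fp_mult A w v"
  and one_FP [simp]: "\<one>\<^bsub>FP\<^esub> = []"
  by (simp_all add: free_product_def)

lemma reduced_Nil [simp]: "reduced []"
  by (simp add: reduced_word_def)

lemma reduced_Cons:
  "reduced ((i, a) # w) \<longleftrightarrow>
     i \<in> I \<and> a \<in> carrier (A i) \<and> a \<noteq> \<one>\<^bsub>A i\<^esub> \<and> reduced w \<and> (w = [] \<or> i \<noteq> fst (hd w))"
  unfolding reduced_word_def successively_Cons by auto

lemma reduced_append:
  "reduced (w @ v) \<longleftrightarrow> reduced w \<and> reduced v \<and> (w = [] \<or> v = [] \<or> fst (last w) \<noteq> fst (hd v))"
  unfolding reduced_word_def successively_append_iff by auto

lemma reduced_tl: "reduced (x # w) \<Longrightarrow> reduced w"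
  by (cases x) (simp add: reduced_Cons)

lemma fp_cons_one:
  assumes "reduced w"
  shows "fp_cons A (i, \<one>\<^bsub>A i\<^esub>) w = w"
proof (cases w)
  case (Cons x w')
  obtain j b where x: "x = (j, b)" by (cases x)
  show ?thesis
  proof (cases "i = j")
    case True
    then have "i \<in> I" "b \<in> carrier (A i)" using assms Cons x by (auto simp: reduced_Cons)
    then have "\<one>\<^bsub>A i\<^esub> \<otimes>\<^bsub>A i\<^esub> b = b" using group_factor by (simp add: group.is_monoid)
    then show ?thesis using Cons x True assms by (auto simp: reduced_Cons Let_def)
  next
    case False then show ?thesis using Cons x by simp
  qed
qed simp

lemma fp_cons_reduced:
  assumes "reduced w" "i \<in> I" "a \<in> carrier (A i)"
  shows "reduced (fp_cons A (i, a) w)"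
proof (cases w)
  case Nil then show ?thesis using assms by (simp add: reduced_Cons)
next
  case (Cons x w')
  obtain j b where x: "x = (j, b)" by (cases x)
  show ?thesis
  proof (cases "i = j")
    case True
    then have "b \<in> carrier (A i)" "reduced w'" "w' = [] \<or> i \<noteq> fst (hd w')"
      using assms Cons x by (auto simp: reduced_Cons)
    moreover have "a \<otimes>\<^bsub>A i\<^esub> b \<in> carrier (A i)"
      using group_factor assms \<open>b \<in> carrier (A i)\<close> by (simp add: group.is_monoid monoid.m_closed)
    ultimately show ?thesis using Cons x True assms by (auto simp: reduced_Cons Let_def)
  next
    case False then show ?thesis using Cons x assms by (auto simp: reduced_Cons)
  qed
qed

lemma fp_cons_reduced_Cons: "reduced (x # w) \<Longrightarrow> fp_cons A x w = x # w"
  by (cases x; cases w) (auto simp: reduced_Cons)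

lemma fp_cons_fp_cons:
  assumes w: "reduced w" and i: "i \<in> I" and a: "a \<in> carrier (A i)" and b: "b \<in> carrier (A i)"
  shows "fp_cons A (i, a) (fp_cons A (i, b) w) = fp_cons A (i, a \<otimes>\<^bsub>A i\<^esub> b) w"
proof -
  interpret G: group "A i" using group_factor i by blast
  show ?thesis
  proof (cases w)
    case Nil then show ?thesis using a b by (auto simp: Let_def)
  next
    case (Cons x w')
    obtain j c where x: "x = (j, c)" by (cases x)
    show ?thesis
    proof (cases "i = j")
      case True
      then have c: "c \<in> carrier (A i)" and w': "w' = [] \<or> i \<noteq> fst (hd w')"
        using w Cons x by (auto simp: reduced_Cons)
      have assoc: "a \<otimes>\<^bsub>A i\<^esub> b \<otimes>\<^bsub>A i\<^esub> c = a \<otimes>\<^bsub>A i\<^esub> (b \<otimes>\<^bsub>A i\<^esub> c)"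
        using a b c by (simp add: G.m_assoc)
      show ?thesis
      proof (cases "b \<otimes>\<^bsub>A i\<^esub> c = \<one>\<^bsub>A i\<^esub>")
        case True
        then have "a \<otimes>\<^bsub>A i\<^esub> b \<otimes>\<^bsub>A i\<^esub> c = a" using assoc a by simp
        then show ?thesis using Cons x \<open>i = j\<close> True w' by (cases w') (auto simp: Let_def)
      next
        case False
        then show ?thesis using Cons x \<open>i = j\<close> assoc by (simp add: Let_def)
      qed
    next
      case False
      then show ?thesis using Cons x a by (simp add: Let_def)
    qed
  qed
qed

lemma length_fp_cons_le: "length (fp_cons A x w) \<le> Suc (length w)"
  by (induction A x w rule: fp_cons.induct) (auto simp: Let_def)

lemma fp_mult_Nil [simp]: "fp_mult A [] v = v"
  by (simp add: fp_mult_def)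

lemma fp_mult_Cons [simp]: "fp_mult A (x # w) v = fp_cons A x (fp_mult A w v)"
  by (simp add: fp_mult_def)

lemma fp_mult_append: "fp_mult A (w @ v) u = fp_mult A w (fp_mult A v u)"
  by (simp add: fp_mult_def)

lemma length_fp_mult_le: "length (fp_mult A w v) \<le> length w + length v"
  by (induction w) (auto intro: order_trans[OF length_fp_cons_le])

lemma fp_mult_reduced_append: "reduced (w @ v) \<Longrightarrow> fp_mult A w v = w @ v"
proof (induction w)
  case (Cons x w)
  then show ?case using fp_cons_reduced_Cons reduced_tl by fastforce
qed simp

lemma fp_mult_reduced: "reduced w \<Longrightarrow> reduced v \<Longrightarrow> reduced (fp_mult A w v)"
proof (induction w)
  case (Cons x w)
  obtain i a where x: "x = (i, a)" by (cases x)
  then show ?case using Cons by (auto simp: reduced_Cons fp_cons_reduced)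
qed simp

lemma fp_mult_fp_cons:
  assumes v: "reduced v" and u: "reduced u" and i: "i \<in> I" and a: "a \<in> carrier (A i)"
  shows "fp_mult A (fp_cons A (i, a) v) u = fp_cons A (i, a) (fp_mult A v u)"
proof (cases v)
  case Nil then show ?thesis using u by (simp add: fp_cons_one)
next
  case (Cons x v')
  obtain j b where x: "x = (j, b)" by (cases x)
  have v'u: "reduced (fp_mult A v' u)" using v Cons reduced_tl u fp_mult_reduced by blast
  show ?thesis
  proof (cases "i = j")
    case True
    then have "b \<in> carrier (A i)" using v Cons x by (simp add: reduced_Cons)
    then have "fp_cons A (i, a) (fp_cons A (i, b) (fp_mult A v' u)) =
        fp_cons A (i, a \<otimes>\<^bsub>A i\<^esub> b) (fp_mult A v' u)"
      by (rule fp_cons_fp_cons[OF v'u i a])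
    then show ?thesis using Cons x True fp_cons_one[OF v'u, of i] by (simp add: Let_def)
  next
    case False
    then show ?thesis
      using Cons x fp_cons_one fp_mult_reduced[OF v u] by (cases "a = \<one>\<^bsub>A i\<^esub>") simp_all
  qed
qed

lemma fp_mult_assoc:
  "reduced w \<Longrightarrow> reduced v \<Longrightarrow> reduced u \<Longrightarrow>
    fp_mult A (fp_mult A w v) u = fp_mult A w (fp_mult A v u)"
proof (induction w)
  case (Cons x w)
  obtain i a where x: "x = (i, a)" by (cases x)
  then have "i \<in> I" "a \<in> carrier (A i)" "reduced w" using Cons.prems by (auto simp: reduced_Cons)
  then show ?case
    using Cons x by (simp add: fp_mult_fp_cons fp_mult_reduced)
qed simp

lemma fp_mult_left_inverse: "reduced w \<Longrightarrow> \<exists>v. reduced v \<and> fp_mult A v w = []"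
proof (induction w)
  case Nil then show ?case by (intro exI[of _ "[]"]) simp
next
  case (Cons x w)
  obtain i a where x: "x = (i, a)" by (cases x)
  then have ia: "i \<in> I" "a \<in> carrier (A i)" and w: "reduced w" using Cons.prems by (auto simp: reduced_Cons)
  interpret G: group "A i" using group_factor ia by blast
  obtain v where v: "reduced v" "fp_mult A v w = []" using Cons.IH w by blast
  let ?z = "fp_cons A (i, inv\<^bsub>A i\<^esub> a) []"
  have z: "reduced ?z" using ia by (intro fp_cons_reduced) auto
  have "fp_mult A ?z (x # w) = fp_cons A (i, inv\<^bsub>A i\<^esub> a) (x # w)"
    using fp_mult_fp_cons[of "[]" "x # w" i "inv\<^bsub>A i\<^esub> a"] Cons.prems ia by simp
  also have "\<dots> = w" using x ia by (simp add: Let_def)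
  finally have "fp_mult A (fp_mult A v ?z) (x # w) = []"
    using fp_mult_assoc v z Cons.prems by simp
  then show ?case using fp_mult_reduced v z by blast
qed

lemma group_FP: "group FP"
  by (rule groupI) (auto simp: fp_mult_reduced fp_mult_assoc fp_mult_left_inverse)

sublocale FP: group "free_product I A"
  by (rule group_FP)

definition letter :: "'i \<Rightarrow> 'a \<Rightarrow> ('i \<times> 'a) list" where
  "letter i a = fp_cons A (i, a) []"

lemma letter_reduced: "i \<in> I \<Longrightarrow> a \<in> carrier (A i) \<Longrightarrow> reduced (letter i a)"
  unfolding letter_def by (rule fp_cons_reduced) auto

lemma letter_eq_Nil_iff: "letter i a = [] \<longleftrightarrow> a = \<one>\<^bsub>A i\<^esub>"
  unfolding letter_def by simp

lemma letter_eq_singleton: "a \<noteq> \<one>\<^bsub>A i\<^esub> \<Longrightarrow> letter i a = [(i, a)]"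
  unfolding letter_def by simp

lemma fp_mult_letter:
  "reduced v \<Longrightarrow> i \<in> I \<Longrightarrow> a \<in> carrier (A i) \<Longrightarrow> fp_mult A (letter i a) v = fp_cons A (i, a) v"
  unfolding letter_def using fp_mult_fp_cons[of "[]" v i a] by simp

lemma Cons_eq_letter_mult: "reduced ((i, a) # w) \<Longrightarrow> (i, a) # w = letter i a \<otimes>\<^bsub>FP\<^esub> w"
  using fp_mult_letter fp_cons_reduced_Cons by (simp add: reduced_Cons)

lemma append_Cons_eq_conj_mult:
  assumes w: "reduced (p @ (i, a) # q)"
  shows "p @ (i, a) # q =
    (p \<otimes>\<^bsub>FP\<^esub> letter i a \<otimes>\<^bsub>FP\<^esub> inv\<^bsub>FP\<^esub> p) \<otimes>\<^bsub>FP\<^esub> (p \<otimes>\<^bsub>FP\<^esub> q)"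
proof -
  have p: "reduced p" and iq: "reduced ((i, a) # q)" using w by (auto simp: reduced_append)
  then have "p \<in> carrier FP" "q \<in> carrier FP" "letter i a \<in> carrier FP"
    by (auto simp: reduced_Cons letter_reduced)
  moreover have "p @ (i, a) # q = p \<otimes>\<^bsub>FP\<^esub> (letter i a \<otimes>\<^bsub>FP\<^esub> q)"
    using fp_mult_reduced_append[OF w] Cons_eq_letter_mult[OF iq] by simp
  ultimately show ?thesis
    by (simp del: mult_FP carrier_FP add: FP.m_assoc FP.inv_solve_left)
qed

lemma letter_hom: "i \<in> I \<Longrightarrow> letter i \<in> hom (A i) FP"
proof (rule homI)
  fix a b assume i: "i \<in> I" and a: "a \<in> carrier (A i)" and b: "b \<in> carrier (A i)"
  then have "letter i (a \<otimes>\<^bsub>A i\<^esub> b) = fp_cons A (i, a) (letter i b)"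
    unfolding letter_def using fp_cons_fp_cons[of "[]" i a b] by simp
  then show "letter i (a \<otimes>\<^bsub>A i\<^esub> b) = letter i a \<otimes>\<^bsub>FP\<^esub> letter i b"
    using fp_mult_letter[OF letter_reduced[OF i b] i a] by simp
qed (simp add: letter_reduced)

definition lift :: "('c, 'd) monoid_scheme \<Rightarrow> ('i \<Rightarrow> 'a \<Rightarrow> 'c) \<Rightarrow> ('i \<times> 'a) list \<Rightarrow> 'c" where
  "lift H f w = foldr (\<lambda>x y. f (fst x) (snd x) \<otimes>\<^bsub>H\<^esub> y) w \<one>\<^bsub>H\<^esub>"

lemma lift_Nil [simp]: "lift H f [] = \<one>\<^bsub>H\<^esub>"
  by (simp add: lift_def)

lemma lift_Cons [simp]: "lift H f ((i, a) # w) = f i a \<otimes>\<^bsub>H\<^esub> lift H f w"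
  by (simp add: lift_def)

context
  fixes H :: "('c, 'd) monoid_scheme" and f :: "'i \<Rightarrow> 'a \<Rightarrow> 'c"
  assumes H: "group H" and f: "\<And>i. i \<in> I \<Longrightarrow> f i \<in> hom (A i) H"
begin

interpretation H: group H by (rule H)

lemma lift_closed: "reduced w \<Longrightarrow> lift H f w \<in> carrier H"
proof (induction w)
  case (Cons x w)
  obtain i a where x: "x = (i, a)" by (cases x)
  then have "f i a \<in> carrier H" using Cons.prems f by (auto simp: reduced_Cons hom_def)
  then show ?case using Cons x by (simp add: reduced_Cons)
qed simp

lemma lift_fp_cons:
  assumes w: "reduced w" and i: "i \<in> I" and a: "a \<in> carrier (A i)"
  shows "lift H f (fp_cons A (i, a) w) = f i a \<otimes>\<^bsub>H\<^esub> lift H f w"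
proof -
  interpret h: group_hom "A i" H "f i"
    using group_factor[OF i] H f[OF i] by (simp add: group_hom_def group_hom_axioms_def)
  have fa: "f i a \<in> carrier H" using a by simp
  show ?thesis
  proof (cases w)
    case Nil then show ?thesis using fa by (simp add: Let_def)
  next
    case (Cons x w')
    obtain j b where x: "x = (j, b)" by (cases x)
    show ?thesis
    proof (cases "i = j")
      case True
      then have w: "w = (i, b) # w'" using Cons x by simp
      then have b: "b \<in> carrier (A i)" and w': "reduced w'" using assms by (auto simp: reduced_Cons)
      have "f i a \<otimes>\<^bsub>H\<^esub> lift H f w = f i (a \<otimes>\<^bsub>A i\<^esub> b) \<otimes>\<^bsub>H\<^esub> lift H f w'"
        using w a b lift_closed[OF w'] by (simp add: H.m_assoc)
      then show ?thesis using w lift_closed[OF w'] by (simp add: Let_def)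
    next
      case False
      then show ?thesis using Cons x lift_closed[OF w] by (simp add: Let_def)
    qed
  qed
qed

lemma lift_hom: "lift H f \<in> hom FP H"
proof (rule homI)
  fix w v assume "w \<in> carrier FP" "v \<in> carrier FP"
  then show "lift H f (w \<otimes>\<^bsub>FP\<^esub> v) = lift H f w \<otimes>\<^bsub>H\<^esub> lift H f v"
  proof (induction w)
    case (Cons x w)
    obtain i a where x: "x = (i, a)" by (cases x)
    then have "i \<in> I" "a \<in> carrier (A i)" "reduced w" using Cons.prems by (auto simp: reduced_Cons)
    moreover then have "f i a \<in> carrier H" using f by (auto simp: hom_def)
    ultimately show ?case
      using Cons x by (simp add: lift_fp_cons fp_mult_reduced lift_closed H.m_assoc)
  qed (simp add: lift_closed)
qed (simp add: lift_closed)

lemma lift_letter: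
  assumes "i \<in> I" "a \<in> carrier (A i)"
  shows "lift H f (letter i a) = f i a"
proof -
  have "f i a \<in> carrier H" using f assms by (auto simp: hom_def)
  then show ?thesis using lift_fp_cons[of "[]" i a] assms by (simp add: letter_def)
qed

end

end

section \<open>Elements of finite order in a free product\<close>

context free_prod
begin

lemma pow_cyclically_reduced:
  assumes w: "reduced w" "w \<noteq> []" "fst (hd w) \<noteq> fst (last w)"
  shows "w [^]\<^bsub>FP\<^esub> (Suc k) = concat (replicate (Suc k) w) \<and> reduced (concat (replicate (Suc k) w))"
proof (induction k)
  case (Suc k)
  let ?c = "concat (replicate (Suc k) w)"
  have r: "reduced (w @ ?c)" using Suc w by (auto simp: reduced_append)
  have "w [^]\<^bsub>FP\<^esub> Suc (Suc k) = w \<otimes>\<^bsub>FP\<^esub> w [^]\<^bsub>FP\<^esub> Suc k"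
    using w by (intro FP.nat_pow_Suc2) simp
  also have "\<dots> = w @ ?c" using Suc fp_mult_reduced_append[OF r] by simp
  finally show ?case using r by simp
qed (use w in simp)

lemma conj_letter_shorter:
  assumes w: "reduced ((i, a) # m @ [(i, b)])" (is "reduced ?w")
  shows "length (inv\<^bsub>FP\<^esub> (letter i a) \<otimes>\<^bsub>FP\<^esub> ?w \<otimes>\<^bsub>FP\<^esub> letter i a) < length ?w"
proof -
  have ia: "i \<in> I" "a \<in> carrier (A i)" and b: "b \<in> carrier (A i)" and m: "reduced m"
    using w by (auto simp: reduced_Cons reduced_append)
  interpret h: group_hom "A i" FP "letter i"
    using group_factor[OF ia(1)] group_FP letter_hom[OF ia(1)]
    by (simp add: group_hom_def group_hom_axioms_def)
  have "inv\<^bsub>FP\<^esub> (letter i a) \<otimes>\<^bsub>FP\<^esub> ?w = fp_cons A (i, inv\<^bsub>A i\<^esub> a) ?w"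
    using w ia by (simp add: fp_mult_letter flip: h.hom_inv)
  also have "\<dots> = m @ [(i, b)]" using ia by (simp add: Let_def)
  finally have "inv\<^bsub>FP\<^esub> (letter i a) \<otimes>\<^bsub>FP\<^esub> ?w \<otimes>\<^bsub>FP\<^esub> letter i a =
      fp_mult A m (fp_cons A (i, b) (fp_cons A (i, a) []))"
    by (simp add: fp_mult_append letter_def)
  also have "\<dots> = fp_mult A m (fp_cons A (i, b \<otimes>\<^bsub>A i\<^esub> a) [])"
    using fp_cons_fp_cons[of "[]" i b a] ia b by simp
  also have "length \<dots> \<le> length m + 1"
    using length_fp_mult_le[of m] length_fp_cons_le[of "(i, b \<otimes>\<^bsub>A i\<^esub> a)" "[]"]
    by (metis add_left_mono le_trans list.size(3) One_nat_def)
  finally show ?thesis by simp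
qed

definition conj_torsion_letter :: "nat \<Rightarrow> ('i \<times> 'a) list \<Rightarrow> bool" where
  "conj_torsion_letter k w \<longleftrightarrow> (\<exists>u i a. reduced u \<and> i \<in> I \<and> a \<in> carrier (A i) \<and>
     a [^]\<^bsub>A i\<^esub> k = \<one>\<^bsub>A i\<^esub> \<and> w = u \<otimes>\<^bsub>FP\<^esub> letter i a \<otimes>\<^bsub>FP\<^esub> inv\<^bsub>FP\<^esub> u)"

lemma conj_torsion_letter_conjD:
  assumes "g \<in> carrier FP" "w \<in> carrier FP"
    and "conj_torsion_letter k (inv\<^bsub>FP\<^esub> g \<otimes>\<^bsub>FP\<^esub> w \<otimes>\<^bsub>FP\<^esub> g)"
  shows "conj_torsion_letter k w"
proof -
  obtain u i a where u: "reduced u" "i \<in> I" "a \<in> carrier (A i)" "a [^]\<^bsub>A i\<^esub> k = \<one>\<^bsub>A i\<^esub>"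
    and conj: "inv\<^bsub>FP\<^esub> g \<otimes>\<^bsub>FP\<^esub> w \<otimes>\<^bsub>FP\<^esub> g = u \<otimes>\<^bsub>FP\<^esub> letter i a \<otimes>\<^bsub>FP\<^esub> inv\<^bsub>FP\<^esub> u"
    using assms(3) unfolding conj_torsion_letter_def by blast
  have "w = (g \<otimes>\<^bsub>FP\<^esub> u) \<otimes>\<^bsub>FP\<^esub> letter i a \<otimes>\<^bsub>FP\<^esub> inv\<^bsub>FP\<^esub> (g \<otimes>\<^bsub>FP\<^esub> u)"
    using FP.conj_eq_conjD[OF assms(1,2) _ _ conj] u letter_reduced by simp
  moreover have "reduced (g \<otimes>\<^bsub>FP\<^esub> u)" using FP.m_closed assms(1) u(1) by (simp del: mult_FP)
  ultimately show ?thesis using u unfolding conj_torsion_letter_def by blast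
qed

lemma conj_torsion_letter_letter:
  assumes "i \<in> I" "a \<in> carrier (A i)" "letter i a [^]\<^bsub>FP\<^esub> (k::nat) = []"
  shows "conj_torsion_letter k (letter i a)"
proof -
  interpret h: group_hom "A i" FP "letter i"
    using group_factor[OF assms(1)] group_FP letter_hom[OF assms(1)]
    by (simp add: group_hom_def group_hom_axioms_def)
  have "letter i (a [^]\<^bsub>A i\<^esub> k) = []" using assms by (simp add: h.hom_nat_pow)
  then have "a [^]\<^bsub>A i\<^esub> k = \<one>\<^bsub>A i\<^esub>" by (simp add: letter_eq_Nil_iff)
  moreover have "letter i a = \<one>\<^bsub>FP\<^esub> \<otimes>\<^bsub>FP\<^esub> letter i a \<otimes>\<^bsub>FP\<^esub> inv\<^bsub>FP\<^esub> \<one>\<^bsub>FP\<^esub>"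
    using letter_reduced[OF assms(1,2)] by (simp del: mult_FP one_FP)
  ultimately show ?thesis
    using assms unfolding conj_torsion_letter_def by (intro exI[of _ "\<one>\<^bsub>FP\<^esub>"]) auto
qed

lemma finite_order_conj_torsion_letter:
  fixes k :: nat
  assumes "reduced w" "k > 0" "w [^]\<^bsub>FP\<^esub> k = []"
  shows "w = [] \<or> conj_torsion_letter k w"
  using assms
proof (induction "length w" arbitrary: w rule: less_induct)
  case less
  note w = less.prems(1)
  show ?case
  proof (cases w)
    case (Cons x r)
    obtain i a where x: "x = (i, a)" by (cases x)
    have ia: "i \<in> I" "a \<in> carrier (A i)" "a \<noteq> \<one>\<^bsub>A i\<^esub>" using w Cons x by (auto simp: reduced_Cons)
    consider "r = []" | "r \<noteq> []" "fst (last r) \<noteq> i" | m b where "r = m @ [(i, b)]"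
      by (metis append_butlast_last_id prod.collapse)
    then show ?thesis
    proof cases
      case 1
      then have "w = letter i a" using Cons x ia by (simp add: letter_eq_singleton)
      then show ?thesis using conj_torsion_letter_letter ia less.prems(3) by simp
    next
      case 2
      then have "w [^]\<^bsub>FP\<^esub> Suc (k - 1) = concat (replicate (Suc (k - 1)) w)"
        using pow_cyclically_reduced[OF w] Cons x by simp
      then show ?thesis using less.prems(2,3) Cons by simp
    next
      case 3
      let ?g = "letter i a"
      let ?w' = "inv\<^bsub>FP\<^esub> ?g \<otimes>\<^bsub>FP\<^esub> w \<otimes>\<^bsub>FP\<^esub> ?g"
      have g: "?g \<in> carrier FP" and wc: "w \<in> carrier FP" using letter_reduced ia w by simp_all
      have "?w' [^]\<^bsub>FP\<^esub> k = inv\<^bsub>FP\<^esub> ?g \<otimes>\<^bsub>FP\<^esub> \<one>\<^bsub>FP\<^esub> \<otimes>\<^bsub>FP\<^esub> ?g"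
        using FP.nat_pow_conj[OF g wc] less.prems(3) by (simp del: mult_FP)
      then have "?w' [^]\<^bsub>FP\<^esub> k = \<one>\<^bsub>FP\<^esub>" using g by (simp del: mult_FP one_FP carrier_FP)
      moreover have "length ?w' < length w" using conj_letter_shorter w Cons x 3 by simp
      moreover have "?w' \<in> carrier FP" using g wc by (simp del: mult_FP carrier_FP)
      ultimately have "?w' = \<one>\<^bsub>FP\<^esub> \<or> conj_torsion_letter k ?w'"
        using less.hyps less.prems(2) by simp
      moreover have "w = \<one>\<^bsub>FP\<^esub>" if "?w' = \<one>\<^bsub>FP\<^esub>"
        using that g FP.conj_eq_conjD[OF g wc FP.one_closed FP.one_closed]
        by (simp del: mult_FP one_FP carrier_FP)
      ultimately show ?thesis using conj_torsion_letter_conjD[OF g wc] by auto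
    qed
  qed simp
qed

end

section \<open>Maps induced by homomorphisms of the factors\<close>

locale free_prod_map = A: free_prod I A + B: free_prod I B
  for I :: "'i set" and A :: "'i \<Rightarrow> ('a, 'b) monoid_scheme" and B :: "'i \<Rightarrow> ('c, 'd) monoid_scheme" +
  fixes h :: "'i \<Rightarrow> 'a \<Rightarrow> 'c"
  assumes h_hom: "\<And>i. i \<in> I \<Longrightarrow> h i \<in> hom (A i) (B i)"
    and h_surj: "\<And>i. i \<in> I \<Longrightarrow> h i ` carrier (A i) = carrier (B i)"
begin

definition fp_map :: "('i \<times> 'a) list \<Rightarrow> ('i \<times> 'c) list" where
  "fp_map = A.lift B.FP (\<lambda>i a. B.letter i (h i a))"

lemma letter_comp_hom: "i \<in> I \<Longrightarrow> (\<lambda>a. B.letter i (h i a)) \<in> hom (A i) B.FP"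
  using hom_compose[OF h_hom B.letter_hom] by (simp add: comp_def)

sublocale group_hom A.FP B.FP fp_map
  using A.group_FP B.group_FP A.lift_hom[OF B.group_FP letter_comp_hom]
  by (simp add: group_hom_def group_hom_axioms_def fp_map_def)

lemma fp_map_letter: "i \<in> I \<Longrightarrow> a \<in> carrier (A i) \<Longrightarrow> fp_map (A.letter i a) = B.letter i (h i a)"
  unfolding fp_map_def by (rule A.lift_letter[OF B.group_FP letter_comp_hom])

lemma fp_map_surj: "B.reduced v \<Longrightarrow> \<exists>w. A.reduced w \<and> fp_map w = v"
proof (induction v)
  case Nil then show ?case by (intro exI[of _ "[]"]) (simp add: fp_map_def)
next
  case (Cons y v)
  obtain i b where y: "y = (i, b)" by (cases y)
  have ib: "i \<in> I" "b \<in> carrier (B i)" and v: "B.reduced v"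
    using Cons.prems y by (auto simp: B.reduced_Cons)
  obtain w where w: "A.reduced w" "fp_map w = v" using Cons.IH v by blast
  obtain a where a: "a \<in> carrier (A i)" "h i a = b" using h_surj[OF ib(1)] ib(2) by force
  have l: "A.letter i a \<in> carrier A.FP" using A.letter_reduced[OF ib(1) a(1)] by simp
  have "fp_map (A.letter i a \<otimes>\<^bsub>A.FP\<^esub> w) = B.letter i b \<otimes>\<^bsub>B.FP\<^esub> v"
    using hom_mult[OF l] w fp_map_letter[OF ib(1) a(1)] a(2) by simp
  also have "\<dots> = y # v" using B.Cons_eq_letter_mult Cons.prems y by simp
  finally show ?case using A.FP.m_closed[OF l] w(1) by (intro exI[of _ "A.letter i a \<otimes>\<^bsub>A.FP\<^esub> w"]) simp
qed

lemma fp_map_conj_letter_surj: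
  assumes "B.reduced v" "i \<in> I" "a \<in> carrier (A i)"
  obtains u where "A.reduced u"
    "fp_map (u \<otimes>\<^bsub>A.FP\<^esub> A.letter i a \<otimes>\<^bsub>A.FP\<^esub> inv\<^bsub>A.FP\<^esub> u) =
      v \<otimes>\<^bsub>B.FP\<^esub> B.letter i (h i a) \<otimes>\<^bsub>B.FP\<^esub> inv\<^bsub>B.FP\<^esub> v"
proof -
  obtain u where u: "A.reduced u" "fp_map u = v" using fp_map_surj[OF assms(1)] by blast
  moreover have "u \<in> carrier A.FP" "A.letter i a \<in> carrier A.FP"
    using u(1) A.letter_reduced[OF assms(2,3)] by simp_all
  ultimately show ?thesis
    using that fp_map_letter[OF assms(2,3)]
    by (simp del: A.mult_FP A.carrier_FP A.one_FP B.mult_FP B.carrier_FP B.one_FP)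
qed

lemma fp_map_eq_map:
  assumes "A.reduced w" "\<forall>(i, a) \<in> set w. h i a \<noteq> \<one>\<^bsub>B i\<^esub>"
  shows "fp_map w = map (\<lambda>(i, a). (i, h i a)) w \<and> B.reduced (map (\<lambda>(i, a). (i, h i a)) w)"
  using assms
proof (induction w)
  case Nil then show ?case by (simp add: fp_map_def)
next
  case (Cons x w)
  obtain i a where x: "x = (i, a)" by (cases x)
  have ia: "i \<in> I" "a \<in> carrier (A i)" and w: "A.reduced w" and hd: "w = [] \<or> i \<noteq> fst (hd w)"
    using Cons.prems x by (auto simp: A.reduced_Cons)
  have ha: "h i a \<in> carrier (B i)" "h i a \<noteq> \<one>\<^bsub>B i\<^esub>"
    using h_hom[OF ia(1)] ia(2) Cons.prems(2) x by (auto simp: hom_def)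
  let ?m = "map (\<lambda>(i, a). (i, h i a)) w"
  have IH: "fp_map w = ?m" "B.reduced ?m" using Cons w by auto
  have "B.reduced ((i, h i a) # ?m)"
    using ia ha IH hd by (cases w) (auto simp: B.reduced_Cons)
  moreover have "fp_map (x # w) = B.letter i (h i a) \<otimes>\<^bsub>B.FP\<^esub> ?m"
    using x IH by (simp add: fp_map_def)
  ultimately show ?case using B.Cons_eq_letter_mult x by simp
qed

lemma kernel_fp_map_subset:
  assumes "A.reduced w" "fp_map w = []"
  shows "w \<in> normal_closure A.FP (\<Union>i\<in>I. A.letter i ` kernel (A i) (B i) (h i))"
  using assms
proof (induction "length w" arbitrary: w rule: less_induct)
  case less
  let ?M = "normal_closure A.FP (\<Union>i\<in>I. A.letter i ` kernel (A i) (B i) (h i))"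
  have gens: "(\<Union>i\<in>I. A.letter i ` kernel (A i) (B i) (h i)) \<subseteq> carrier A.FP"
    using A.letter_reduced by (auto simp: kernel_def)
  interpret M: normal ?M A.FP by (rule normal_closure_normal[OF A.group_FP gens])
  show ?case
  proof (cases "\<forall>(i, a) \<in> set w. h i a \<noteq> \<one>\<^bsub>B i\<^esub>")
    case True
    then have "w = []" using fp_map_eq_map less.prems by fastforce
    then show ?thesis using M.one_closed by simp
  next
    case False
    then obtain i a where "(i, a) \<in> set w" and ia: "h i a = \<one>\<^bsub>B i\<^esub>" by auto
    then obtain p q where w: "w = p @ (i, a) # q" by (auto dest: split_list)
    let ?c = "p \<otimes>\<^bsub>A.FP\<^esub> A.letter i a \<otimes>\<^bsub>A.FP\<^esub> inv\<^bsub>A.FP\<^esub> p"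
    have w_split: "w = ?c \<otimes>\<^bsub>A.FP\<^esub> (p \<otimes>\<^bsub>A.FP\<^esub> q)"
      using A.append_Cons_eq_conj_mult less.prems(1) w by blast
    have p: "A.reduced p" and q: "A.reduced q" and ii: "i \<in> I" "a \<in> carrier (A i)"
      using less.prems(1) w by (auto simp: A.reduced_append A.reduced_Cons)
    have "A.letter i a \<in> ?M"
      using normal_closure_incl[OF gens A.group_FP] ii ia by (auto simp: kernel_def)
    then have c: "?c \<in> ?M" using M.inv_op_closed2 p by simp
    have "fp_map (A.letter i a) = \<one>\<^bsub>B.FP\<^esub>"
      using fp_map_letter[OF ii] ia B.letter_eq_Nil_iff by simp
    moreover have "p \<in> carrier A.FP" "A.letter i a \<in> carrier A.FP"
      using p A.letter_reduced[OF ii] by simp_all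
    ultimately have "fp_map ?c = \<one>\<^bsub>B.FP\<^esub>"
      by (simp del: A.mult_FP A.carrier_FP B.mult_FP B.carrier_FP B.one_FP)
    moreover have pq: "p \<otimes>\<^bsub>A.FP\<^esub> q \<in> carrier A.FP" using A.fp_mult_reduced[OF p q] by simp
    ultimately have "fp_map (p \<otimes>\<^bsub>A.FP\<^esub> q) = []"
      using hom_mult[OF M.mem_carrier[OF c] pq] hom_closed[OF pq] less.prems(2) w_split
      by (simp del: A.mult_FP A.carrier_FP B.mult_FP B.carrier_FP B.one_FP)
    moreover have "length (p \<otimes>\<^bsub>A.FP\<^esub> q) < length w" using A.length_fp_mult_le[of p q] w by simp
    ultimately have "p \<otimes>\<^bsub>A.FP\<^esub> q \<in> ?M" using less.hyps pq by simp
    then show ?thesis using w_split c M.m_closed by simp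
  qed
qed

lemma kernel_fp_map:
  "kernel A.FP B.FP fp_map = normal_closure A.FP (\<Union>i\<in>I. A.letter i ` kernel (A i) (B i) (h i))"
proof
  show "kernel A.FP B.FP fp_map \<subseteq> normal_closure A.FP (\<Union>i\<in>I. A.letter i ` kernel (A i) (B i) (h i))"
    using kernel_fp_map_subset by (auto simp: kernel_def)
  have "A.letter i a \<in> kernel A.FP B.FP fp_map" if "i \<in> I" "a \<in> kernel (A i) (B i) (h i)" for i a
    using that fp_map_letter A.letter_reduced B.letter_eq_Nil_iff by (auto simp: kernel_def)
  then show "normal_closure A.FP (\<Union>i\<in>I. A.letter i ` kernel (A i) (B i) (h i)) \<subseteq> kernel A.FP B.FP fp_map"
    by (intro normal_closure_least normal_kernel) blast
qed

end

section \<open>The torsion series of a free product\<close>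

lemma free_prod_map_Mod:
  assumes "free_prod I A" and "\<And>i. i \<in> I \<Longrightarrow> N i \<lhd> A i"
  shows "free_prod_map I A (\<lambda>i. A i Mod N i) (\<lambda>i a. N i #>\<^bsub>A i\<^esub> a)"
proof (intro free_prod_map.intro free_prod_map_axioms.intro free_prod.intro)
  fix i assume i: "i \<in> I"
  then interpret normal "N i" "A i" by (rule assms(2))
  show "group (A i Mod N i)" by (rule factorgroup_is_group)
  show "(\<lambda>a. N i #>\<^bsub>A i\<^esub> a) \<in> hom (A i) (A i Mod N i)" by (rule r_coset_hom_Mod)
  show "(\<lambda>a. N i #>\<^bsub>A i\<^esub> a) ` carrier (A i) = carrier (A i Mod N i)"
    by (auto simp: FactGroup_def RCOSETS_def)
qed (rule free_prod.group_factor[OF assms(1)])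

context free_prod
begin

definition factor_Tor :: "nat \<Rightarrow> ('i \<times> 'a) list set" where
  "factor_Tor n = normal_closure FP (\<Union>i\<in>I. letter i ` Tor (A i) n)"

lemma letters_Tor_subset: "(\<Union>i\<in>I. letter i ` Tor (A i) n) \<subseteq> carrier FP"
  using Tor_subset_carrier[OF group_factor] letter_reduced by fastforce

lemma factor_Tor_normal: "factor_Tor n \<lhd> FP"
  unfolding factor_Tor_def by (rule normal_closure_normal[OF group_FP letters_Tor_subset])

lemma letter_mem_factor_Tor: "i \<in> I \<Longrightarrow> a \<in> Tor (A i) n \<Longrightarrow> letter i a \<in> factor_Tor n"
  unfolding factor_Tor_def using normal_closure_incl[OF letters_Tor_subset group_FP] by blast

lemma factor_Tor_mono: "m \<le> n \<Longrightarrow> factor_Tor m \<subseteq> factor_Tor n"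
  unfolding factor_Tor_def using Tor_mono[OF group_factor]
  by (intro normal_closure_mono[OF group_FP letters_Tor_subset]) blast

lemma root_mem_factor_Tor_Suc:
  fixes k :: nat
  assumes g: "g \<in> carrier FP" and k: "k > 0" and gk: "g [^]\<^bsub>FP\<^esub> k \<in> factor_Tor m"
  shows "g \<in> factor_Tor (Suc m)"
proof -
  interpret q: free_prod_map I A "\<lambda>i. A i Mod Tor (A i) m" "\<lambda>i a. Tor (A i) m #>\<^bsub>A i\<^esub> a"
    by (rule free_prod_map_Mod[OF free_prod_axioms Tor_normal[OF group_factor]])
  interpret M: normal "factor_Tor (Suc m)" FP by (rule factor_Tor_normal)
  have ker: "kernel FP q.B.FP q.fp_map = factor_Tor m"
    unfolding q.kernel_fp_map factor_Tor_def
    using normal.kernel_r_coset_hom[OF Tor_normal[OF group_factor]] by simp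
  have "q.fp_map g [^]\<^bsub>q.B.FP\<^esub> k = []"
    using gk g unfolding ker[symmetric] by (simp add: kernel_def flip: q.hom_nat_pow)
  moreover have "q.B.reduced (q.fp_map g)" using q.hom_closed[OF g] by simp
  ultimately consider "q.fp_map g = []"
    | u' i c where "q.B.reduced u'" "i \<in> I" "c \<in> carrier (A i Mod Tor (A i) m)"
        "c [^]\<^bsub>A i Mod Tor (A i) m\<^esub> k = \<one>\<^bsub>A i Mod Tor (A i) m\<^esub>"
        "q.fp_map g = u' \<otimes>\<^bsub>q.B.FP\<^esub> q.B.letter i c \<otimes>\<^bsub>q.B.FP\<^esub> inv\<^bsub>q.B.FP\<^esub> u'"
    using q.B.finite_order_conj_torsion_letter[OF _ k] unfolding q.B.conj_torsion_letter_def by blast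
  then obtain t where t: "t \<in> factor_Tor (Suc m)" "q.fp_map g = q.fp_map t"
  proof cases
    case 1
    then show ?thesis using that[of "[]"] M.one_closed by (simp add: q.fp_map_def)
  next
    case (2 u' i c)
    obtain a where a: "a \<in> carrier (A i)" "c = Tor (A i) m #>\<^bsub>A i\<^esub> a"
      using 2(3) q.h_surj[OF 2(2)] by auto
    have "a \<in> Tor (A i) (Suc m)" using Tor_SucI[OF a(1) k] 2(4) a(2) by simp
    obtain u where u: "reduced u"
      "q.fp_map (u \<otimes>\<^bsub>FP\<^esub> letter i a \<otimes>\<^bsub>FP\<^esub> inv\<^bsub>FP\<^esub> u) =
        u' \<otimes>\<^bsub>q.B.FP\<^esub> q.B.letter i (Tor (A i) m #>\<^bsub>A i\<^esub> a) \<otimes>\<^bsub>q.B.FP\<^esub> inv\<^bsub>q.B.FP\<^esub> u'"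
      by (rule q.fp_map_conj_letter_surj[OF 2(1,2) a(1)])
    have "u \<otimes>\<^bsub>FP\<^esub> letter i a \<otimes>\<^bsub>FP\<^esub> inv\<^bsub>FP\<^esub> u \<in> factor_Tor (Suc m)"
      using u(1) M.inv_op_closed2 letter_mem_factor_Tor[OF 2(2) \<open>a \<in> Tor (A i) (Suc m)\<close>] by simp
    moreover have "q.fp_map g = q.fp_map (u \<otimes>\<^bsub>FP\<^esub> letter i a \<otimes>\<^bsub>FP\<^esub> inv\<^bsub>FP\<^esub> u)"
      using u(2) 2(5) a(2) by simp
    ultimately show ?thesis by (rule that)
  qed
  moreover have "kernel FP q.B.FP q.fp_map \<subseteq> factor_Tor (Suc m)"
    using ker factor_Tor_mono[of m "Suc m"] by simp
  ultimately show ?thesis using q.mem_normal_if_hom_eq[OF factor_Tor_normal _ g] by blast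
qed

lemma Tor_FP_eq: "Tor FP n = factor_Tor n"
proof
  show "factor_Tor n \<subseteq> Tor FP n"
    unfolding factor_Tor_def
    using Tor_hom_image[OF group_factor group_FP letter_hom]
    by (intro normal_closure_least[OF Tor_normal[OF group_FP]]) blast
  show "Tor FP n \<subseteq> factor_Tor n"
  proof (induction n)
    case 0
    then show ?case using normal.axioms(1)[OF factor_Tor_normal] subgroup.one_closed by fastforce
  next
    case (Suc n)
    have "torsion_mod FP (Tor FP n) \<subseteq> factor_Tor (Suc n)"
      using Suc root_mem_factor_Tor_Suc unfolding torsion_mod_def by blast
    then show ?case
      unfolding Tor_Suc_eq[OF group_FP] by (rule normal_closure_least[OF factor_Tor_normal])
  qed
qed

lemma letter_retraction:
  assumes i: "i \<in> I"
  obtains p where "p \<in> hom FP (A i)" "\<And>a. a \<in> carrier (A i) \<Longrightarrow> p (letter i a) = a"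
proof -
  interpret G: group "A i" by (rule group_factor[OF i])
  let ?f = "\<lambda>j a. if j = i then a else \<one>\<^bsub>A i\<^esub>"
  have f: "?f j \<in> hom (A j) (A i)" for j
    by (cases "j = i") (auto intro!: homI)
  show ?thesis
    using that lift_hom[OF G.is_group f] lift_letter[OF G.is_group f i] by simp
qed

lemma Tor_FP_stable_iff:
  "Tor FP (Suc n) \<subseteq> Tor FP n \<longleftrightarrow> (\<forall>i\<in>I. Tor (A i) (Suc n) \<subseteq> Tor (A i) n)"
proof
  assume stable: "Tor FP (Suc n) \<subseteq> Tor FP n"
  show "\<forall>i\<in>I. Tor (A i) (Suc n) \<subseteq> Tor (A i) n"
  proof (intro ballI subsetI)
    fix i x assume i: "i \<in> I" and x: "x \<in> Tor (A i) (Suc n)"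
    obtain p where p: "p \<in> hom FP (A i)" "\<And>a. a \<in> carrier (A i) \<Longrightarrow> p (letter i a) = a"
      using letter_retraction[OF i] by blast
    have "letter i x \<in> Tor FP n"
      using Tor_hom_image[OF group_factor[OF i] group_FP letter_hom[OF i]] x stable by blast
    then have "p (letter i x) \<in> Tor (A i) n"
      using Tor_hom_image[OF group_FP group_factor[OF i] p(1)] by blast
    moreover have "x \<in> carrier (A i)" using x Tor_subset_carrier[OF group_factor[OF i]] by blast
    ultimately show "x \<in> Tor (A i) n" using p(2) by simp
  qed
next
  assume "\<forall>i\<in>I. Tor (A i) (Suc n) \<subseteq> Tor (A i) n"
  then show "Tor FP (Suc n) \<subseteq> Tor FP n"
    unfolding Tor_FP_eq factor_Tor_def
    by (intro normal_closure_mono[OF group_FP letters_Tor_subset]) blast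
qed

end

theorem corollary3p15:
  fixes I :: "'i set" and A :: "'i \<Rightarrow> ('a, 'b) monoid_scheme"
  assumes "\<And>i. i \<in> I \<Longrightarrow> group (A i)"
  shows "TorLen (free_product I A) = (SUP i\<in>I. TorLen (A i))"
proof -
  interpret free_prod I A by (rule free_prod.intro) (rule assms)
  show ?thesis
  proof (rule enat_eqI_le)
    fix n
    have "TorLen FP \<le> enat n \<longleftrightarrow> Tor FP (Suc n) \<subseteq> Tor FP n"
      by (rule TorLen_le_iff[OF group_FP])
    also have "\<dots> \<longleftrightarrow> (\<forall>i\<in>I. Tor (A i) (Suc n) \<subseteq> Tor (A i) n)"
      by (rule Tor_FP_stable_iff)
    also have "\<dots> \<longleftrightarrow> (\<forall>i\<in>I. TorLen (A i) \<le> enat n)"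
      using TorLen_le_iff group_factor by blast
    also have "\<dots> \<longleftrightarrow> (SUP i\<in>I. TorLen (A i)) \<le> enat n"
      by (simp add: SUP_le_iff)
    finally show "TorLen FP \<le> enat n \<longleftrightarrow> (SUP i\<in>I. TorLen (A i)) \<le> enat n" .
  qed
qed

end
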